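(* For every $\mathsf T$-term $P$ and every $*$-term $Q$, the tree $se(P\land^\circ Q)$ has exactly one $\mathsf T$-$*$-decomposition, namely $(se(P)[\mathsf T\mapsto\triangle],\,se(Q))$.
   Context: Let $A$ be a nonempty set of atoms; terms are closed terms over constants $\mathsf T,\mathsf F$, atoms $a\in A$, unary $\neg$, binary $\land^\circ$, $\lor^\circ$. Evaluation trees $\mathcal T_A$: $\mathsf T,\mathsf F\in\mathcal T_A$ and $(X\unlhd a\unrhd Y)\in\mathcal T_A$ for $X,Y\in\mathcal T_A$, $a\in A$; depth $d(\mathsf T)=d(\mathsf F)=0$, $d(Y\unlhd a\unrhd Z)=1+\max(d(Y),d(Z))$. $\mathcal T_{A,\triangle}$: the same with leaves in $\{\mathsf T,\mathsf F,\triangle\}$. Leaf replacement $X[\ell_1\mapsto Y_1,\ldots]$ replaces every leaf labelled $\ell_i$ by $Y_i$. $se$: $se(\mathsf T)=\mathsf T$, $se(\mathsf F)=\mathsf F$, $se(a)=\mathsf T\unlhd a\unrhd\mathsf F$, $se(\neg P)=se(P)[\mathsf T\mapsto\mathsf F,\mathsf F\mapsto\mathsf T]$, $se(P\land^\circ Q)=se(P)[\mathsf T\mapsto se(Q)]$, $se(P\lor^\circ Q)=se(P)[\mathsf F\mapsto se(Q)]$. Syntactic categories ($a\in A$): $\mathsf T$-terms $P^{\mathsf T}::=\mathsf T\mid(a\land^\circ P^{\mathsf T})\lor^\circ P^{\mathsf T}$; $\mathsf F$-terms $P^{\mathsf F}::=\mathsf F\mid(a\lor^\circ P^{\mathsf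 F})\land^\circ P^{\mathsf F}$; $\ell$-terms $P^\ell::=(a\land^\circ P^{\mathsf T})\lor^\circ P^{\mathsf F}\mid(\neg a\land^\circ P^{\mathsf T})\lor^\circ P^{\mathsf F}$; $*$-terms $P^*::=P^c\mid P^d$, $P^c::=P^\ell\mid P^*\land^\circ P^d$, $P^d::=P^\ell\mid P^*\lor^\circ P^c$. A pair $(Y,Z)\in\mathcal T_{A,\triangle}\times\mathcal T_A$ is a candidate $\mathsf T$-$*$-decomposition (ctsd) of $X\in\mathcal T_A$ if $X=Y[\triangle\mapsto Z]$, $Y$ contains neither $\mathsf T$ nor $\mathsf F$, $Z$ contains both $\mathsf T$ and $\mathsf F$, and there is no pair $(U,V)\in\mathcal T_{A,\triangle}\times\mathcal T_A$ with $Z=U[\triangle\mapsto V]$, $U$ containing $\triangle$, $U\neq\triangle$, and $U$ containing neither $\mathsf T$ nor $\mathsf F$. A ctsd $(Y,Z)$ of $X$ is a $\mathsf T$-$*$-decomposition (tsd) if there is no other ctsd $(Y',Z')$ of $X$ with $d(Z')<d(Z)$. *)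

theory Defs
  imports Main
begin

text \<open>Atoms are the elements of the (nonempty) type 'a, playing the role of A.\<close>

datatype 'a pterm =
    Tc | Fc | Atom 'a | Neg "'a pterm"
  | LAnd "'a pterm" "'a pterm"
  | LOr "'a pterm" "'a pterm"

datatype leaf = LT | LF | LTri

text \<open>Evaluation trees with leaves in {T, F, triangle};
  Node X a Y stands for X \<unlhd> a \<unrhd> Y.  Trees in T_A are those without LTri leaves.\<close>
datatype 'a tree = Leaf leaf | Node "'a tree" 'a "'a tree"

fun leaves :: "'a tree \<Rightarrow> leaf set" where
  "leaves (Leaf l) = {l}"
| "leaves (Node X a Y) = leaves X \<union> leaves Y"

fun depth :: "'a tree \<Rightarrow> nat" where
  "depth (Leaf l) = 0"
| "depth (Node X a Y) = 1 + max (depth X) (depth Y)"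

fun repl :: "(leaf \<Rightarrow> 'a tree) \<Rightarrow> 'a tree \<Rightarrow> 'a tree" where
  "repl f (Leaf l) = f l"
| "repl f (Node X a Y) = Node (repl f X) a (repl f Y)"

fun se :: "'a pterm \<Rightarrow> 'a tree" where
  "se Tc = Leaf LT"
| "se Fc = Leaf LF"
| "se (Atom a) = Node (Leaf LT) a (Leaf LF)"
| "se (Neg P) = repl ((\<lambda>l. Leaf l)(LT := Leaf LF, LF := Leaf LT)) (se P)"
| "se (LAnd P Q) = repl ((\<lambda>l. Leaf l)(LT := se Q)) (se P)"
| "se (LOr P Q) = repl ((\<lambda>l. Leaf l)(LF := se Q)) (se P)"

inductive Tterm :: "'a pterm \<Rightarrow> bool" where
  "Tterm Tc"
| "Tterm P \<Longrightarrow> Tterm Q \<Longrightarrow> Tterm (LOr (LAnd (Atom a) P) Q)"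

inductive Fterm :: "'a pterm \<Rightarrow> bool" where
  "Fterm Fc"
| "Fterm P \<Longrightarrow> Fterm Q \<Longrightarrow> Fterm (LAnd (LOr (Atom a) P) Q)"

inductive lterm :: "'a pterm \<Rightarrow> bool" where
  "Tterm P \<Longrightarrow> Fterm Q \<Longrightarrow> lterm (LOr (LAnd (Atom a) P) Q)"
| "Tterm P \<Longrightarrow> Fterm Q \<Longrightarrow> lterm (LOr (LAnd (Neg (Atom a)) P) Q)"

inductive cterm and dterm :: "'a pterm \<Rightarrow> bool" where
  "lterm P \<Longrightarrow> cterm P"
| "cterm P \<Longrightarrow> dterm Q \<Longrightarrow> cterm (LAnd P Q)"
| "dterm P \<Longrightarrow> dterm Q \<Longrightarrow> cterm (LAnd P Q)"
| "lterm P \<Longrightarrow> dterm P"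
| "cterm P \<Longrightarrow> cterm Q \<Longrightarrow> dterm (LOr P Q)"
| "dterm P \<Longrightarrow> cterm Q \<Longrightarrow> dterm (LOr P Q)"

definition starterm :: "'a pterm \<Rightarrow> bool" where
  "starterm P \<longleftrightarrow> cterm P \<or> dterm P"

definition ctsd :: "'a tree \<Rightarrow> 'a tree \<Rightarrow> 'a tree \<Rightarrow> bool" where
  "ctsd X Y Z \<longleftrightarrow>
     LTri \<notin> leaves Z \<and>
     X = repl ((\<lambda>l. Leaf l)(LTri := Z)) Y \<and>
     LT \<notin> leaves Y \<and> LF \<notin> leaves Y \<and>
     LT \<in> leaves Z \<and> LF \<in> leaves Z \<and>
     \<not> (\<exists>U V. LTri \<notin> leaves V \<and> Z = repl ((\<lambda>l. Leaf l)(LTri := V)) U \<and>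
              LTri \<in> leaves U \<and> U \<noteq> Leaf LTri \<and> LT \<notin> leaves U \<and> LF \<notin> leaves U)"

definition tsd :: "'a tree \<Rightarrow> 'a tree \<Rightarrow> 'a tree \<Rightarrow> bool" where
  "tsd X Y Z \<longleftrightarrow> ctsd X Y Z \<and>
     \<not> (\<exists>Y' Z'. (Y', Z') \<noteq> (Y, Z) \<and> ctsd X Y' Z' \<and> depth Z' < depth Z)"

end

theory Submission
  imports Defs
begin

(* A candidate decomposition of a tree X is unique: if Y[LTri := Z] = Y'[LTri := Z'] with
  LTri-only prefixes Y, Y', then one of Z, Z' arises from the other by grafting it into a
  LTri-only tree, which indecomposability forbids unless the two are equal.  Hence the
  depth-minimality in tsd is vacuous.  For a T-term P the tree se P has only T-leaves, so
  (se P [T := LTri], se Q) is a candidate decomposition of se (P and Q) as soon as se Q contains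
  both T and F and is indecomposable.  This holds for every *-term Q by induction: an l-term
  yields a node whose subtrees have disjoint leaf sets, and grafting an indecomposable tree into
  a leaf of an indecomposable LTri-free tree keeps it indecomposable. *)

abbreviation subst_leaf :: "leaf \<Rightarrow> 'a tree \<Rightarrow> 'a tree \<Rightarrow> 'a tree" where
  "subst_leaf l S t \<equiv> repl ((\<lambda>l. Leaf l)(l := S)) t"

definition indecomposable :: "'a tree \<Rightarrow> bool" where
  "indecomposable Z \<longleftrightarrow>
     \<not> (\<exists>U V. leaves U \<subseteq> {LTri} \<and> U \<noteq> Leaf LTri \<and> LTri \<notin> leaves V \<and>
              Z = subst_leaf LTri V U)"

lemma leaves_nonempty: "leaves t \<noteq> {}"
  by (induction t) auto

lemma leaves_subset_LTri_iff: "leaves Y \<subseteq> {LTri} \<longleftrightarrow> LT \<notin> leaves Y \<and> LF \<notin> leaves Y"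
  by (auto, metis leaf.exhaust)

lemma ctsd_iff:
  "ctsd X Y Z \<longleftrightarrow>
     LTri \<notin> leaves Z \<and> X = subst_leaf LTri Z Y \<and> leaves Y \<subseteq> {LTri} \<and>
     LT \<in> leaves Z \<and> LF \<in> leaves Z \<and> indecomposable Z"
proof -
  have tri_iff: "leaves U \<subseteq> {LTri} \<longleftrightarrow> LTri \<in> leaves U \<and> LT \<notin> leaves U \<and> LF \<notin> leaves U"
    for U :: "'a tree"
    using leaves_subset_LTri_iff leaves_nonempty by blast
  have "indecomposable Z \<longleftrightarrow>
     \<not> (\<exists>U V. LTri \<notin> leaves V \<and> Z = subst_leaf LTri V U \<and>
              LTri \<in> leaves U \<and> U \<noteq> Leaf LTri \<and> LT \<notin> leaves U \<and> LF \<notin> leaves U)"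
    unfolding indecomposable_def tri_iff by blast
  then show ?thesis
    unfolding ctsd_def leaves_subset_LTri_iff by blast
qed

lemma leaves_repl: "leaves (repl f t) = (\<Union>l\<in>leaves t. leaves (f l))"
  by (induction t) auto

lemma repl_repl: "repl f (repl g t) = repl (\<lambda>l. repl f (g l)) t"
  by (induction t) auto

lemma repl_cong: "(\<And>l. l \<in> leaves t \<Longrightarrow> f l = g l) \<Longrightarrow> repl f t = repl g t"
  by (induction t) auto

lemma repl_Leaf: "repl Leaf t = t"
  by (induction t) auto

lemma subst_leaf_absent: "l \<notin> leaves t \<Longrightarrow> subst_leaf l S t = t"
  by (metis (mono_tags, lifting) fun_upd_other repl_Leaf repl_cong)

lemma depth_subst_leaf_ge: "l \<in> leaves t \<Longrightarrow> depth S \<le> depth (subst_leaf l S t)"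
  by (induction t) auto

lemma depth_subst_leaf_gt:
  "l \<in> leaves t \<Longrightarrow> t \<noteq> Leaf l \<Longrightarrow> depth S < depth (subst_leaf l S t)"
  by (cases t) (auto dest: depth_subst_leaf_ge[where S=S] simp: less_Suc_eq_le)

lemma subst_leaf_eq_self: "l \<in> leaves S \<Longrightarrow> subst_leaf l S t = S \<Longrightarrow> t = Leaf l"
  by (metis depth_subst_leaf_gt less_irrefl subst_leaf_absent)

lemma inj_subst_leaf:
  assumes S: "l \<in> leaves S"
  shows "inj (subst_leaf l S)"
proof (rule injI)
  fix A B assume "subst_leaf l S A = subst_leaf l S B"
  then show "A = B"
  proof (induction A arbitrary: B)
    case (Leaf x)
    show ?case
    proof (cases "x = l")
      case True
      with Leaf have "subst_leaf l S B = S" by (simp add: fun_upd_def)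
      with True show ?thesis using subst_leaf_eq_self[OF S] by simp
    next
      case False
      with Leaf S show ?thesis by (cases B) (auto split: if_splits)
    qed
  next
    case (Node A1 a A2)
    show ?case
    proof (cases B)
      case (Leaf y)
      with Node.prems S have "y = l"
        by (cases "y = l") auto
      with Node.prems Leaf have "subst_leaf l S (Node A1 a A2) = S" by (simp add: fun_upd_def)
      then show ?thesis using subst_leaf_eq_self[OF S] by blast
    next
      case (Node B1 b B2)
      with Node.prems Node.IH show ?thesis by simp
    qed
  qed
qed

lemma leaves_subst_tri: "leaves U \<subseteq> {LTri} \<Longrightarrow> leaves (subst_leaf LTri V U) = leaves V"
  using leaves_nonempty[of U] by (auto simp: leaves_repl)

lemma depth_subst_tri:
  "leaves U \<subseteq> {LTri} \<Longrightarrow> depth (subst_leaf LTri V U) = depth U + depth V"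
  by (induction U) auto

lemma subst_tri_cancel:
  "leaves Y \<subseteq> {LTri} \<Longrightarrow> leaves Y' \<subseteq> {LTri} \<Longrightarrow>
   subst_leaf LTri Z Y = subst_leaf LTri Z Y' \<Longrightarrow> Y = Y'"
proof (induction Y arbitrary: Y')
  case (Leaf x)
  then have "depth Z = depth Y' + depth Z"
    using depth_subst_tri[of Y' Z] by (simp add: fun_upd_def)
  with Leaf show ?case by (cases Y') auto
next
  case (Node Y1 a Y2)
  show ?case
  proof (cases Y')
    case (Leaf y)
    with Node.prems have "depth Z = depth (Node Y1 a Y2) + depth Z"
      using depth_subst_tri[of "Node Y1 a Y2" Z] by (simp add: fun_upd_def)
    then show ?thesis by simp
  next
    case (Node Y1' b Y2')
    with Node.prems Node.IH show ?thesis by simp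
  qed
qed

lemma subst_tri_prefix:
  "leaves Y \<subseteq> {LTri} \<Longrightarrow> leaves Y' \<subseteq> {LTri} \<Longrightarrow>
   subst_leaf LTri Z Y = subst_leaf LTri Z' Y' \<Longrightarrow>
   \<exists>W. leaves W \<subseteq> {LTri} \<and> (Z = subst_leaf LTri Z' W \<or> Z' = subst_leaf LTri Z W)"
proof (induction Y arbitrary: Y')
  case (Leaf x)
  then show ?case by auto
next
  case (Node Y1 a Y2)
  show ?case
  proof (cases Y')
    case (Leaf y)
    with Node.prems show ?thesis by (intro exI[of _ "Node Y1 a Y2"]) auto
  next
    case (Node Y1' b Y2')
    with Node.prems show ?thesis by (intro Node.IH(1)[of Y1']) auto
  qed
qed

lemma indecomposable_subst_tri:
  assumes "indecomposable Z" "Z = subst_leaf LTri V W" "leaves W \<subseteq> {LTri}" "LTri \<notin> leaves V"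
  shows "W = Leaf LTri"
  using assms unfolding indecomposable_def by blast

lemma ctsd_unique: "ctsd X Y Z \<Longrightarrow> ctsd X Y' Z' \<Longrightarrow> Y = Y' \<and> Z = Z'"
proof -
  assume c: "ctsd X Y Z" "ctsd X Y' Z'"
  then have Y: "leaves Y \<subseteq> {LTri}" "leaves Y' \<subseteq> {LTri}"
    and eq: "subst_leaf LTri Z Y = subst_leaf LTri Z' Y'"
    by (auto simp: ctsd_iff)
  obtain W where W: "leaves W \<subseteq> {LTri}"
    and "Z = subst_leaf LTri Z' W \<or> Z' = subst_leaf LTri Z W"
    using subst_tri_prefix[OF Y eq] by blast
  then have "W = Leaf LTri"
    using c indecomposable_subst_tri[OF _ _ W] by (auto simp: ctsd_iff)
  with \<open>Z = _ \<or> _\<close> have "Z = Z'" by auto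
  with subst_tri_cancel[OF Y] eq show ?thesis by auto
qed

lemma tsd_iff_ctsd: "tsd X Y Z \<longleftrightarrow> ctsd X Y Z"
  unfolding tsd_def using ctsd_unique by blast

lemma indecomposable_Node:
  assumes "leaves A \<inter> leaves B = {}"
  shows "indecomposable (Node A a B)"
  unfolding indecomposable_def
proof (rule notI, elim exE conjE)
  fix U V assume tri: "leaves U \<subseteq> {LTri}" and "U \<noteq> Leaf LTri"
    and eq: "Node A a B = subst_leaf LTri V U"
  then obtain U1 U2 b where "U = Node U1 b U2" by (cases U) auto
  with eq tri have "leaves A = leaves V" "leaves B = leaves V"
    using leaves_subst_tri[of U1 V] leaves_subst_tri[of U2 V] by auto
  with assms leaves_nonempty[of V] show False by auto
qed

(* A LTri-only prefix of R[l := S] cannot reach into a copy of the indecomposable S,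
  so it is already a prefix of R. *)
lemma subst_leaf_eq_subst_tri:
  assumes "l \<in> leaves S" "indecomposable S" "leaves U \<subseteq> {LTri}"
    "LTri \<notin> leaves V" "subst_leaf l S R = subst_leaf LTri V U"
  shows "\<exists>W. R = subst_leaf LTri W U \<and> V = subst_leaf l S W"
  using assms(3-)
proof (induction U arbitrary: R)
  case (Leaf x)
  then show ?case by auto
next
  case (Node U1 a U2)
  show ?case
  proof (cases R)
    case (Leaf y)
    have "S = subst_leaf LTri V (Node U1 a U2)"
      using Node.prems(3) Leaf by (cases "y = l") (auto simp: fun_upd_def)
    then show ?thesis
      using assms(2) Node.prems(1,2) unfolding indecomposable_def by blast
  next
    case (Node R1 b R2)
    with Node.prems(3) have eq: "subst_leaf l S R1 = subst_leaf LTri V U1"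
      "subst_leaf l S R2 = subst_leaf LTri V U2" "a = b"
      by (simp_all add: fun_upd_def)
    have tri: "leaves U1 \<subseteq> {LTri}" "leaves U2 \<subseteq> {LTri}"
      using Node.prems(1) by auto
    obtain W1 where W1: "R1 = subst_leaf LTri W1 U1" "V = subst_leaf l S W1"
      using Node.IH(1)[OF tri(1) Node.prems(2) eq(1)] by blast
    obtain W2 where W2: "R2 = subst_leaf LTri W2 U2" "V = subst_leaf l S W2"
      using Node.IH(2)[OF tri(2) Node.prems(2) eq(2)] by blast
    have "W1 = W2"
      using inj_subst_leaf[OF assms(1)] W1(2) W2(2) by (simp add: inj_eq)
    with Node eq(3) W1 W2 show ?thesis by (intro exI[of _ W1]) (simp add: fun_upd_def)
  qed
qed

lemma indecomposable_subst_leaf: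
  assumes "l \<in> leaves S" "indecomposable S" "indecomposable R" "LTri \<notin> leaves R"
  shows "indecomposable (subst_leaf l S R)"
  unfolding indecomposable_def
proof (rule notI, elim exE conjE)
  fix U V assume tri: "leaves U \<subseteq> {LTri}" and U: "U \<noteq> Leaf LTri"
    and V: "LTri \<notin> leaves V" and eq: "subst_leaf l S R = subst_leaf LTri V U"
  obtain W where "R = subst_leaf LTri W U"
    using subst_leaf_eq_subst_tri[OF assms(1,2) tri V eq] by blast
  moreover have "LTri \<notin> leaves W"
    using assms(4) calculation leaves_subst_tri[OF tri] by simp
  ultimately show False using assms(3) tri U unfolding indecomposable_def by blast
qed

lemma se_LTri_free: "LTri \<notin> leaves (se P)"
  by (induction P) (auto simp: leaves_repl)

lemma Tterm_leaves: "Tterm P \<Longrightarrow> leaves (se P) = {LT}"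
  by (induction rule: Tterm.induct) (auto simp: leaves_repl)

lemma Fterm_leaves: "Fterm P \<Longrightarrow> leaves (se P) = {LF}"
  by (induction rule: Fterm.induct) (auto simp: leaves_repl)

lemma lterm_se:
  "lterm P \<Longrightarrow> LT \<in> leaves (se P) \<and> LF \<in> leaves (se P) \<and> indecomposable (se P)"
proof (induction rule: lterm.induct)
  case (1 P Q a)
  then have "se (LOr (LAnd (Atom a) P) Q) = Node (se P) a (se Q)"
    using subst_leaf_absent[of LF "se P"] Tterm_leaves[of P] by simp
  then show ?case
    using Tterm_leaves[OF 1(1)] Fterm_leaves[OF 1(2)] indecomposable_Node[of "se P" "se Q" a] by simp
next
  case (2 P Q a)
  then have "se (LOr (LAnd (Neg (Atom a)) P) Q) = Node (se Q) a (se P)"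
    using subst_leaf_absent[of LF "se P"] Tterm_leaves[of P] by simp
  then show ?case
    using Tterm_leaves[OF 2(1)] Fterm_leaves[OF 2(2)] indecomposable_Node[of "se Q" "se P" a] by auto
qed

lemma cterm_dterm_se:
  "cterm P \<Longrightarrow> LT \<in> leaves (se P) \<and> LF \<in> leaves (se P) \<and> indecomposable (se P)"
  "dterm P \<Longrightarrow> LT \<in> leaves (se P) \<and> LF \<in> leaves (se P) \<and> indecomposable (se P)"
  by (induction rule: cterm_dterm.inducts)
    (auto dest: lterm_se intro: indecomposable_subst_leaf simp: leaves_repl se_LTri_free)

lemma ctsd_se_LAnd:
  assumes "Tterm P" "starterm Q"
  shows "ctsd (se (LAnd P Q)) (subst_leaf LT (Leaf LTri) (se P)) (se Q)"
proof -
  have P: "leaves (se P) = {LT}" using Tterm_leaves[OF assms(1)] .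
  have "se (LAnd P Q) = subst_leaf LTri (se Q) (subst_leaf LT (Leaf LTri) (se P))"
    unfolding repl_repl se.simps by (rule repl_cong) (use P in auto)
  moreover have "leaves (subst_leaf LT (Leaf LTri) (se P)) \<subseteq> {LTri}"
    using P by (simp add: leaves_repl)
  ultimately show ?thesis
    using assms(2) cterm_dterm_se se_LTri_free[of Q] unfolding ctsd_iff starterm_def by blast
qed

theorem theorem3p7:
  fixes P Q :: "'a pterm"
  assumes "Tterm P" and "starterm Q"
  shows "tsd (se (LAnd P Q)) (repl ((\<lambda>l. Leaf l)(LT := Leaf LTri)) (se P)) (se Q) \<and>
         (\<forall>Y Z. tsd (se (LAnd P Q)) Y Z \<longrightarrow>
            Y = repl ((\<lambda>l. Leaf l)(LT := Leaf LTri)) (se P) \<and> Z = se Q)"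
  using ctsd_se_LAnd[OF assms] ctsd_unique unfolding tsd_iff_ctsd by blast

end
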